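(* Consider $M+1$ base stations indexed $i\in\{0,1,\dots,M\}$ and a finite set $\mathcal{N}$ of users. For each base station $i$ and user $j$, let $\eta_{i,j}\in[0,1)$ be the SINR of user $j$ with respect to base station $i$, and let $B>0$ be the bandwidth. An assignment is a family $(U_0,\dots,U_M)$ of pairwise disjoint subsets of $\mathcal{N}$ ($U_i$ is the set of users served by base station $i$, $N_i=|U_i|$). Its total network capacity is $$C_{tot}(U_0,\dots,U_M)=\sum_{i:\,N_i>0}\frac{B}{N_i}\sum_{j\in U_i}\log_2\!\left(\frac{1}{1-\eta_{i,j}}\right),$$ and let $C_{NC}=\max C_{tot}(U_0,\dots,U_M)$, the maximum over all assignments (the network-capacity-maximizing scheme). Fix thresholds $\lambda_1<\lambda_2<\dots<\lambda_q$ and define the level $L_{i,j}=0$ if $\eta_{i,j}<\lambda_1$, $L_{i,j}=l$ if $\lambda_l\le\eta_{i,j}<\lambda_{l+1}$ for $l\in\{1,\dots,q-1\}$, and $L_{i,j}=q$ if $\eta_{i,j}\ge\lambda_q$. For an assignment, put $U_{i,l}=\{j\in U_i: L_{i,j}=l\}$, $N_{i,l}=|U_{i,l}|$, and let $\overline{\eta}_{i,l}$ be the arithmetic mean of $\{\eta_{i,j}: j\in U_{i,l}\}$ when $N_{i,l}>0$. Define the grouped capacity $$C_{UC}(U_0,\dots,U_M)=\sum_{i:\,N_i>0}B\sum_{l:\,N_{i,l}>0}\frac{N_{i,l}}{N_i}\log_2\!\left(\frac{1}{1-\overline{\eta}_{i,l}}\right).$$ Then for every assignment $(U_0,\dots,U_M)$,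 $C_{UC}(U_0,\dots,U_M)\le C_{NC}$; that is, $C_{NC}$ is an upper bound of $C_{UC}$.
   Context: Setting: downlink femtocell network with one macrocell base station (index $0$) and $M$ femtocell base stations; each user connects to at most one base station, and the bandwidth $B$ of a base station is divided equally among its $N_i$ served users, so a user $j$ served by station $i$ has capacity $\frac{B}{N_i}\log_2\frac{1}{1-\eta_{i,j}}$, where $\eta_{i,j}=|h_{i,j}|^2P_i/(\sigma^2+\sum_{l=0}^M|h_{l,j}|^2P_l)$ lies in $[0,1)$. $C_{UC}$ is the capacity of the proposed user-classification scheme, in which each user's SINR is replaced by the average SINR of its level group at its base station. *)

theory Defs
  imports Complex_Main
begin

definition is_assignment :: "nat \<Rightarrow> 'u set \<Rightarrow> (nat \<Rightarrow> 'u set) \<Rightarrow> bool" where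
  "is_assignment M Nset U \<longleftrightarrow>
     (\<forall>i\<in>{0..M}. U i \<subseteq> Nset) \<and>
     (\<forall>i\<in>{0..M}. \<forall>k\<in>{0..M}. i \<noteq> k \<longrightarrow> U i \<inter> U k = {})"

definition C_tot :: "nat \<Rightarrow> real \<Rightarrow> (nat \<Rightarrow> 'u \<Rightarrow> real) \<Rightarrow> (nat \<Rightarrow> 'u set) \<Rightarrow> real" where
  "C_tot M B eta U =
     (\<Sum>i\<in>{i\<in>{0..M}. card (U i) > 0}.
        B / real (card (U i)) * (\<Sum>j\<in>U i. log 2 (1 / (1 - eta i j))))"

definition C_NC :: "nat \<Rightarrow> 'u set \<Rightarrow> real \<Rightarrow> (nat \<Rightarrow> 'u \<Rightarrow> real) \<Rightarrow> real" where
  "C_NC M Nset B eta = Max {C_tot M B eta U | U. is_assignment M Nset U}"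

definition level :: "(nat \<Rightarrow> real) \<Rightarrow> nat \<Rightarrow> real \<Rightarrow> nat" where
  "level lam q x =
     (if x < lam 1 then 0
      else if lam q \<le> x then q
      else (THE l. l \<in> {1..q-1} \<and> lam l \<le> x \<and> x < lam (l+1)))"

definition level_group :: "(nat \<Rightarrow> real) \<Rightarrow> nat \<Rightarrow> (nat \<Rightarrow> 'u \<Rightarrow> real) \<Rightarrow> (nat \<Rightarrow> 'u set) \<Rightarrow> nat \<Rightarrow> nat \<Rightarrow> 'u set" where
  "level_group lam q eta U i l = {j\<in>U i. level lam q (eta i j) = l}"

definition avg_sinr :: "(nat \<Rightarrow> real) \<Rightarrow> nat \<Rightarrow> (nat \<Rightarrow> 'u \<Rightarrow> real) \<Rightarrow> (nat \<Rightarrow> 'u set) \<Rightarrow> nat \<Rightarrow> nat \<Rightarrow> real" where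
  "avg_sinr lam q eta U i l =
     (\<Sum>j\<in>level_group lam q eta U i l. eta i j) / real (card (level_group lam q eta U i l))"

definition C_UC :: "nat \<Rightarrow> real \<Rightarrow> (nat \<Rightarrow> real) \<Rightarrow> nat \<Rightarrow> (nat \<Rightarrow> 'u \<Rightarrow> real) \<Rightarrow> (nat \<Rightarrow> 'u set) \<Rightarrow> real" where
  "C_UC M B lam q eta U =
     (\<Sum>i\<in>{i\<in>{0..M}. card (U i) > 0}.
        B * (\<Sum>l\<in>{l\<in>{0..q}. card (level_group lam q eta U i l) > 0}.
               real (card (level_group lam q eta U i l)) / real (card (U i))
               * log 2 (1 / (1 - avg_sinr lam q eta U i l))))"

end

theory Submission
  imports Defs "HOL-Analysis.Convex" "HOL-Library.FuncSet" "HOL-Library.Disjoint_Sets"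
begin

text \<open>The per-user capacity \<open>x \<mapsto> log 2 (1 / (1 - x))\<close> is convex on \<open>[0, 1)\<close>. By Jensen's
  inequality, replacing the SINRs of a level group by their mean can only lower the group's
  total capacity, so grouping never beats the plain capacity \<open>C_tot\<close> of the same assignment,
  which in turn is at most the maximum \<open>C_NC\<close> over the finitely many assignments.\<close>

lemma convex_on_log_inverse_one_minus:
  fixes b :: real assumes "b > 1"
  shows "convex_on {..<1} (\<lambda>x. log b (1 / (1 - x)))"
proof (rule convex_onI)
  fix t x y :: real
  assume t: "0 < t" "t < 1" and xy: "x \<in> {..<1}" "y \<in> {..<1}"
  have "1 - ((1 - t) *\<^sub>R x + t *\<^sub>R y) = (1 - t) * (1 - x) + t * (1 - y)"
    by (simp add: algebra_simps)
  moreover have "0 < (1 - t) * (1 - x) + t * (1 - y)"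
    using t xy by (simp add: add_pos_pos)
  ultimately show "log b (1 / (1 - ((1 - t) *\<^sub>R x + t *\<^sub>R y)))
      \<le> (1 - t) * log b (1 / (1 - x)) + t * log b (1 / (1 - y))"
    using convex_onD[OF minus_log_convex[OF assms], of t "1 - x" "1 - y"] t xy
    by (simp add: log_divide)
qed simp

lemma convex_on_average:
  fixes f :: "real \<Rightarrow> real" and g :: "'a \<Rightarrow> real"
  assumes "convex_on A f" "finite S" "S \<noteq> {}" "\<And>j. j \<in> S \<Longrightarrow> g j \<in> A"
  shows "f ((\<Sum>j\<in>S. g j) / card S) \<le> (\<Sum>j\<in>S. f (g j)) / card S"
proof -
  have "card S > 0" using assms(2,3) by (simp add: card_gt_0_iff)
  then have "(\<Sum>j\<in>S. 1 / real (card S)) = 1" by simp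
  from convex_on_sum[OF assms(2,3,1) this _ assms(4)]
  show ?thesis by (simp add: sum_divide_distrib)
qed

lemma sum_card_mult_group_average_le:
  fixes f :: "real \<Rightarrow> real" and e :: "'a \<Rightarrow> real" and G :: "'l \<Rightarrow> 'a set"
  assumes f: "convex_on A f" "\<And>x. x \<in> A \<Longrightarrow> 0 \<le> f x"
    and V: "finite V" "\<And>j. j \<in> V \<Longrightarrow> e j \<in> A"
    and G: "finite L" "\<And>l. l \<in> L \<Longrightarrow> G l \<subseteq> V" "disjoint_family_on G L"
  shows "(\<Sum>l\<in>{l\<in>L. card (G l) > 0}. card (G l) * f ((\<Sum>j\<in>G l. e j) / card (G l)))
         \<le> (\<Sum>j\<in>V. f (e j))"
proof -
  \<comment> \<open>Nonnegativity of \<open>f\<close> spares us showing that the groups cover \<open>V\<close>.\<close>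
  let ?L = "{l\<in>L. card (G l) > 0}"
  have "(\<Sum>l\<in>?L. card (G l) * f ((\<Sum>j\<in>G l. e j) / card (G l))) \<le> (\<Sum>l\<in>?L. \<Sum>j\<in>G l. f (e j))"
  proof (rule sum_mono)
    fix l assume l: "l \<in> ?L"
    then have "finite (G l)" "G l \<noteq> {}" by (auto simp: card_gt_0_iff)
    from convex_on_average[OF f(1) this] l G(2) V(2)
    have "f ((\<Sum>j\<in>G l. e j) / card (G l)) \<le> (\<Sum>j\<in>G l. f (e j)) / card (G l)" by blast
    with l show "card (G l) * f ((\<Sum>j\<in>G l. e j) / card (G l)) \<le> (\<Sum>j\<in>G l. f (e j))"
      by (simp add: field_simps)
  qed
  also have "\<dots> = (\<Sum>j\<in>(\<Union>l\<in>?L. G l). f (e j))"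
    using G V(1) by (intro sum.UNION_disjoint[symmetric])
      (auto intro: finite_subset simp: disjoint_family_on_def)
  also have "\<dots> \<le> (\<Sum>j\<in>V. f (e j))"
    using G(2) V f(2) by (intro sum_mono2) auto
  finally show ?thesis .
qed

lemma C_UC_le_C_tot:
  assumes Nset: "finite Nset" and B: "B > 0"
    and eta: "\<And>i j. i \<in> {0..M} \<Longrightarrow> j \<in> Nset \<Longrightarrow> 0 \<le> eta i j \<and> eta i j < 1"
    and U: "is_assignment M Nset U"
  shows "C_UC M B lam q eta U \<le> C_tot M B eta U"
  unfolding C_UC_def C_tot_def avg_sinr_def
proof (rule sum_mono)
  fix i assume i: "i \<in> {i \<in> {0..M}. card (U i) > 0}"
  let ?G = "level_group lam q eta U i" and ?f = "\<lambda>x::real. log 2 (1 / (1 - x))"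
  let ?L = "{l \<in> {0..q}. card (?G l) > 0}"
  have Ui: "U i \<subseteq> Nset" "finite (U i)"
    using i U Nset by (auto simp: is_assignment_def card_gt_0_iff)
  have grouped: "(\<Sum>l\<in>?L. card (?G l) * ?f ((\<Sum>j\<in>?G l. eta i j) / card (?G l)))
      \<le> (\<Sum>j\<in>U i. ?f (eta i j))"
  proof (rule sum_card_mult_group_average_le)
    show "convex_on {0..<1} ?f"
      by (rule convex_on_subset[OF convex_on_log_inverse_one_minus]) auto
  qed (use i Ui eta in \<open>auto simp: level_group_def disjoint_family_on_def divide_simps\<close>)
  have "B * (\<Sum>l\<in>?L. card (?G l) / card (U i) * ?f ((\<Sum>j\<in>?G l. eta i j) / card (?G l)))
      = B / card (U i) * (\<Sum>l\<in>?L. card (?G l) * ?f ((\<Sum>j\<in>?G l. eta i j) / card (?G l)))"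
    by (simp add: sum_distrib_left)
  also have "\<dots> \<le> B / card (U i) * (\<Sum>j\<in>U i. ?f (eta i j))"
    using grouped B by (intro mult_left_mono) auto
  finally show "B * (\<Sum>l\<in>?L. card (?G l) / card (U i) * ?f ((\<Sum>j\<in>?G l. eta i j) / card (?G l)))
      \<le> B / card (U i) * (\<Sum>j\<in>U i. ?f (eta i j))" .
qed

lemma C_tot_restrict: "C_tot M B eta (restrict U {0..M}) = C_tot M B eta U"
  unfolding C_tot_def by (rule sum.cong) auto

lemma C_tot_le_C_NC:
  assumes "finite Nset" "is_assignment M Nset U"
  shows "C_tot M B eta U \<le> C_NC M Nset B eta"
proof -
  let ?S = "{C_tot M B eta U | U. is_assignment M Nset U}"
  have "?S \<subseteq> C_tot M B eta ` ({0..M} \<rightarrow>\<^sub>E Pow Nset)"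
  proof
    fix x assume "x \<in> ?S"
    then obtain V where V: "is_assignment M Nset V" "x = C_tot M B eta V" by blast
    then have "restrict V {0..M} \<in> {0..M} \<rightarrow>\<^sub>E Pow Nset"
      by (auto simp: is_assignment_def)
    with V show "x \<in> C_tot M B eta ` ({0..M} \<rightarrow>\<^sub>E Pow Nset)"
      by (metis C_tot_restrict image_eqI)
  qed
  moreover have "finite ({0..M} \<rightarrow>\<^sub>E Pow Nset)"
    using assms(1) by (intro finite_PiE) auto
  ultimately have "finite ?S" by (meson finite_imageI finite_subset)
  moreover have "C_tot M B eta U \<in> ?S" using assms(2) by blast
  ultimately show ?thesis unfolding C_NC_def by (rule Max_ge)
qed

theorem lemma1:
  fixes M q :: nat and Nset :: "'u set" and B :: real
    and eta :: "nat \<Rightarrow> 'u \<Rightarrow> real" and lam :: "nat \<Rightarrow> real"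
    and U :: "nat \<Rightarrow> 'u set"
  assumes "finite Nset"
    and "B > 0"
    and "\<And>i j. i \<in> {0..M} \<Longrightarrow> j \<in> Nset \<Longrightarrow> 0 \<le> eta i j \<and> eta i j < 1"
    and "q \<ge> 1"
    and "\<And>l. 1 \<le> l \<Longrightarrow> l < q \<Longrightarrow> lam l < lam (l + 1)"
    and "is_assignment M Nset U"
  shows "C_UC M B lam q eta U \<le> C_NC M Nset B eta"
proof -
  have "C_UC M B lam q eta U \<le> C_tot M B eta U"
    using assms(1,2,3,6) by (rule C_UC_le_C_tot)
  also have "\<dots> \<le> C_NC M Nset B eta"
    using assms(1,6) by (rule C_tot_le_C_NC)
  finally show ?thesis .
qed

end
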